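(* Let $L$ be a fixed graph and let $n$ be sufficiently large. For every proper edge-colouring $\psi$ of $K_{L,n}$ there is a set $C_\psi\subseteq V(\tilde R)$ with $|C_\psi|=\Omega_L(n)$ which is compatible with $\tilde L$ with respect to $\psi$.
   Context: For vertex-disjoint graphs $L,R$, the join $K_{L,R}$ has vertex set $V(L)\cup V(R)$ and edge set $E(L)\cup E(R)\cup\{uv: u\in V(L), v\in V(R)\}$; $K_{L,n}$ denotes $K_{L,R}$ where $R$ is an edgeless graph on $n$ vertices; $\tilde L,\tilde R$ denote the copies of $L,R$ inside the join. Given a graph $G$, a proper edge-colouring $\psi$ of $G$ and a subgraph $K\subseteq G$, a vertex $x$ in the common neighbourhood of $V(K)$ is of interest to $K$ with respect to $\psi$ if $\psi(E(K))\cap\{\psi(xk):k\in V(K)\}=\emptyset$. A set $X$ of vertices is compatible with $K$ with respect to $\psi$ if every $x\in X$ is of interest to $K$ and the sets $\{\psi(xk):k\in V(K)\}$, $x\in X$, are pairwise disjoint. The implicit constant in $\Omega_L(n)$ depends only on $L$. *)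

theory Defs
  imports Complex_Main
begin

definition simple_graph :: "'v set \<Rightarrow> 'v set set \<Rightarrow> bool" where
  "simple_graph V E \<longleftrightarrow> finite V \<and>
     (\<forall>e\<in>E. \<exists>u v. u \<noteq> v \<and> u \<in> V \<and> v \<in> V \<and> e = {u, v})"

text \<open>The join K_{L,n}: L is copied on the left (Inl), R is the edgeless graph on
  the n vertices Inr 0, ..., Inr (n-1).\<close>
definition join_verts :: "'a set \<Rightarrow> nat \<Rightarrow> ('a + nat) set" where
  "join_verts V n = Inl ` V \<union> Inr ` {..<n}"

definition join_edges :: "'a set \<Rightarrow> 'a set set \<Rightarrow> nat \<Rightarrow> ('a + nat) set set" where
  "join_edges V E n = (\<lambda>e. Inl ` e) ` E \<union> {{Inl u, Inr i} | u i. u \<in> V \<and> i < n}"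

definition proper_edge_colouring :: "'v set set \<Rightarrow> ('v set \<Rightarrow> 'c) \<Rightarrow> bool" where
  "proper_edge_colouring E \<psi> \<longleftrightarrow>
     (\<forall>e\<in>E. \<forall>f\<in>E. e \<noteq> f \<and> e \<inter> f \<noteq> {} \<longrightarrow> \<psi> e \<noteq> \<psi> f)"

definition common_nbhd :: "'v set \<Rightarrow> 'v set set \<Rightarrow> 'v set \<Rightarrow> 'v set" where
  "common_nbhd VG EG W = {x \<in> VG. \<forall>k\<in>W. {x, k} \<in> EG}"

definition of_interest ::
  "'v set \<Rightarrow> 'v set set \<Rightarrow> ('v set \<Rightarrow> 'c) \<Rightarrow> 'v set \<Rightarrow> 'v set set \<Rightarrow> 'v \<Rightarrow> bool" where
  "of_interest VG EG \<psi> KV KE x \<longleftrightarrow>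
     x \<in> common_nbhd VG EG KV \<and> \<psi> ` KE \<inter> {\<psi> {x, k} | k. k \<in> KV} = {}"

definition compatible ::
  "'v set \<Rightarrow> 'v set set \<Rightarrow> ('v set \<Rightarrow> 'c) \<Rightarrow> 'v set \<Rightarrow> 'v set set \<Rightarrow> 'v set \<Rightarrow> bool" where
  "compatible VG EG \<psi> KV KE X \<longleftrightarrow>
     (\<forall>x\<in>X. of_interest VG EG \<psi> KV KE x) \<and>
     (\<forall>x\<in>X. \<forall>y\<in>X. x \<noteq> y \<longrightarrow>
        {\<psi> {x, k} | k. k \<in> KV} \<inter> {\<psi> {y, k} | k. k \<in> KV} = {})"

end

theory Submission
  imports Defs
begin

text \<open>
  A right vertex j is spoiled only if one of its edges to the left side carries one of the at
  most |E(L)| colours of the left copy of L; by properness each colour occurs at most |V(L)|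
  times on the edges between the sides, so only O(1) right vertices are spoiled. For the same
  reason each right vertex shares a colour with at most |V(L)|^2 others, so a greedy independent
  set of this conflict graph on the unspoiled vertices has linear size.
\<close>

lemma greedy_independent_subset:
  fixes R :: "'b \<Rightarrow> 'b \<Rightarrow> bool"
  assumes "finite A" and "\<And>x y. R x y \<Longrightarrow> R y x"
    and "\<And>x. x \<in> A \<Longrightarrow> card (insert x {y\<in>A. R x y}) \<le> D"
  shows "\<exists>B\<subseteq>A. (\<forall>x\<in>B. \<forall>y\<in>B. x \<noteq> y \<longrightarrow> \<not> R x y) \<and> card A \<le> D * card B"
  using assms(1,3)
proof (induction "card A" arbitrary: A rule: less_induct)
  case less
  show ?case
  proof (cases "A = {}")
    case True
    then show ?thesis by auto
  next
    case False
    then obtain x where x: "x \<in> A" by auto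
    define N where "N = insert x {y\<in>A. R x y}"
    define A' where "A' = A - N"
    have "finite A'" using less.prems(1) by (simp add: A'_def)
    have "card A' < card A"
      using x less.prems(1) by (intro psubset_card_mono) (auto simp: A'_def N_def)
    have bound': "card (insert z {y\<in>A'. R z y}) \<le> D" if "z \<in> A'" for z
    proof -
      have "card (insert z {y\<in>A'. R z y}) \<le> card (insert z {y\<in>A. R z y})"
        using less.prems(1) by (intro card_mono) (auto simp: A'_def)
      also have "\<dots> \<le> D" using less.prems(2) that by (simp add: A'_def)
      finally show ?thesis .
    qed
    obtain B' where B': "B' \<subseteq> A'" "\<forall>x\<in>B'. \<forall>y\<in>B'. x \<noteq> y \<longrightarrow> \<not> R x y"
      "card A' \<le> D * card B'"
      using less.hyps[OF \<open>card A' < card A\<close> \<open>finite A'\<close> bound'] by blast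
    have "finite B'" using B'(1) \<open>finite A'\<close> finite_subset by blast
    have "x \<notin> B'" using B'(1) by (auto simp: A'_def N_def)
    have "card A \<le> card (A' \<union> N)"
      using less.prems(1) by (intro card_mono) (auto simp: A'_def N_def)
    also have "\<dots> \<le> card A' + card N" by (rule card_Un_le)
    also have "\<dots> \<le> D * card B' + D" using B'(3) less.prems(2)[OF x] by (simp add: N_def)
    also have "\<dots> = D * card (insert x B')" using \<open>x \<notin> B'\<close> \<open>finite B'\<close> by simp
    finally have "card A \<le> D * card (insert x B')" .
    moreover have "insert x B' \<subseteq> A" using B'(1) x by (auto simp: A'_def)
    moreover have "\<forall>u\<in>insert x B'. \<forall>v\<in>insert x B'. u \<noteq> v \<longrightarrow> \<not> R u v"
      using B'(1,2) assms(2) by (auto simp: A'_def N_def)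
    ultimately show ?thesis by blast
  qed
qed

definition link_colours :: "'a set \<Rightarrow> (('a + nat) set \<Rightarrow> 'c) \<Rightarrow> nat \<Rightarrow> 'c set" where
  "link_colours V \<psi> j = (\<lambda>u. \<psi> {Inr j, Inl u}) ` V"

lemma cross_edge_in_join_edges:
  assumes "u \<in> V" and "j < n"
  shows "{Inr j, Inl u} \<in> join_edges V E n"
  using assms unfolding join_edges_def by (auto simp: insert_commute)

lemma colours_to_left_eq_link_colours:
  "{\<psi> {Inr j, k} | k. k \<in> Inl ` V} = link_colours V \<psi> j"
  unfolding link_colours_def by auto

lemma card_link_colours_le:
  assumes "finite V"
  shows "card (link_colours V \<psi> j) \<le> card V"
  unfolding link_colours_def using assms by (rule card_image_le)

lemma proper_edge_colouringD:
  assumes "proper_edge_colouring E \<psi>" and "e \<in> E" and "f \<in> E" and "e \<noteq> f" and "e \<inter> f \<noteq> {}"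
  shows "\<psi> e \<noteq> \<psi> f"
  using assms unfolding proper_edge_colouring_def by blast

lemma card_vertices_with_link_colour_le:
  assumes "finite V" and proper: "proper_edge_colouring (join_edges V E n) \<psi>"
  shows "card {j. j < n \<and> k \<in> link_colours V \<psi> j} \<le> card V"
proof -
  define J where "J = {j. j < n \<and> k \<in> link_colours V \<psi> j}"
  define f where "f j = (SOME u. u \<in> V \<and> \<psi> {Inr j, Inl u} = k)" for j
  have f: "f j \<in> V \<and> \<psi> {Inr j, Inl (f j)} = k" if "j \<in> J" for j
  proof -
    have "\<exists>u. u \<in> V \<and> \<psi> {Inr j, Inl u} = k" using that by (auto simp: J_def link_colours_def)
    then show ?thesis unfolding f_def by (rule someI_ex)
  qed
  have "inj_on f J"
  proof (rule inj_onI, rule ccontr)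
    fix a b assume a: "a \<in> J" and b: "b \<in> J" and "f a = f b" and "a \<noteq> b"
    have "{Inr a, Inl (f a)} \<noteq> {Inr b, Inl (f b)}"
      using \<open>a \<noteq> b\<close> by (simp add: doubleton_eq_iff)
    moreover have "{Inr a, Inl (f a)} \<inter> {Inr b, Inl (f b)} \<noteq> {}"
      using \<open>f a = f b\<close> by simp
    moreover have "{Inr a, Inl (f a)} \<in> join_edges V E n" "{Inr b, Inl (f b)} \<in> join_edges V E n"
      using f[OF a] f[OF b] a b by (simp_all add: J_def cross_edge_in_join_edges)
    ultimately have "\<psi> {Inr a, Inl (f a)} \<noteq> \<psi> {Inr b, Inl (f b)}"
      by (intro proper_edge_colouringD[OF proper])
    then show False using f[OF a] f[OF b] by simp
  qed
  moreover have "f ` J \<subseteq> V" using f by auto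
  ultimately show ?thesis unfolding J_def using \<open>finite V\<close> by (rule card_inj_on_le)
qed

lemma card_vertices_meeting_colours_le:
  assumes "finite V" and "proper_edge_colouring (join_edges V E n) \<psi>" and "finite K"
  shows "card {j. j < n \<and> link_colours V \<psi> j \<inter> K \<noteq> {}} \<le> card K * card V"
proof -
  have "{j. j < n \<and> link_colours V \<psi> j \<inter> K \<noteq> {}} =
        (\<Union>k\<in>K. {j. j < n \<and> k \<in> link_colours V \<psi> j})"
    by auto
  also have "card \<dots> \<le> (\<Sum>k\<in>K. card {j. j < n \<and> k \<in> link_colours V \<psi> j})"
    using assms(3) by (rule card_UN_le)
  also have "\<dots> \<le> (\<Sum>k\<in>K. card V)"
    using card_vertices_with_link_colour_le[OF assms(1,2)] by (rule sum_mono)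
  finally show ?thesis by simp
qed

lemma card_vertices_meeting_left_colours_le:
  fixes V :: "'a set"
  assumes "finite V" and "finite E" and "proper_edge_colouring (join_edges V E n) \<psi>"
  shows "card {j. j < n \<and> link_colours V \<psi> j \<inter> \<psi> ` (\<lambda>e. Inl ` e) ` E \<noteq> {}} \<le> card E * card V"
proof -
  have "card {j. j < n \<and> link_colours V \<psi> j \<inter> \<psi> ` (\<lambda>e. Inl ` e) ` E \<noteq> {}}
        \<le> card (\<psi> ` (\<lambda>e. Inl ` e) ` E) * card V"
    using assms by (intro card_vertices_meeting_colours_le) simp_all
  also have "\<dots> \<le> card E * card V"
  proof (rule mult_le_mono1)
    have "card (\<psi> ` (\<lambda>e. Inl ` e) ` E) \<le> card ((\<lambda>e. Inl ` e :: ('a + nat) set) ` E)"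
      using assms(2) by (intro card_image_le) simp
    also have "\<dots> \<le> card E" using assms(2) by (intro card_image_le)
    finally show "card (\<psi> ` (\<lambda>e. Inl ` e) ` E) \<le> card E" .
  qed
  finally show ?thesis .
qed

lemma card_link_colour_conflicts_le:
  assumes "finite V" and "proper_edge_colouring (join_edges V E n) \<psi>"
  shows "card {j. j < n \<and> link_colours V \<psi> j \<inter> link_colours V \<psi> i \<noteq> {}} \<le> card V * card V"
proof -
  have "card {j. j < n \<and> link_colours V \<psi> j \<inter> link_colours V \<psi> i \<noteq> {}}
        \<le> card (link_colours V \<psi> i) * card V"
    using assms by (intro card_vertices_meeting_colours_le) (simp_all add: link_colours_def)
  also have "\<dots> \<le> card V * card V"
    using card_link_colours_le[OF assms(1)] by (rule mult_le_mono1)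
  finally show ?thesis .
qed

lemma compatible_with_left_copy:
  fixes V :: "'a set"
  assumes "B \<subseteq> {..<n}"
    and "\<And>j. j \<in> B \<Longrightarrow> link_colours V \<psi> j \<inter> \<psi> ` (\<lambda>e. Inl ` e) ` E = {}"
    and "\<And>i j. i \<in> B \<Longrightarrow> j \<in> B \<Longrightarrow> i \<noteq> j \<Longrightarrow> link_colours V \<psi> i \<inter> link_colours V \<psi> j = {}"
  shows "compatible (join_verts V n) (join_edges V E n) \<psi> (Inl ` V) ((\<lambda>e. Inl ` e) ` E) (Inr ` B)"
  unfolding compatible_def
proof (intro conjI ballI impI)
  fix x :: "'a + nat" assume "x \<in> Inr ` B"
  then obtain j where x: "x = Inr j" and j: "j \<in> B" by auto
  have "Inr j \<in> common_nbhd (join_verts V n) (join_edges V E n) (Inl ` V)"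
    using assms(1) j by (auto simp: common_nbhd_def join_verts_def intro: cross_edge_in_join_edges)
  then show "of_interest (join_verts V n) (join_edges V E n) \<psi> (Inl ` V) ((\<lambda>e. Inl ` e) ` E) x"
    using assms(2)[OF j] unfolding of_interest_def x colours_to_left_eq_link_colours by blast
next
  fix x y :: "'a + nat" assume "x \<in> Inr ` B" "y \<in> Inr ` B" "x \<noteq> y"
  then obtain i j where "x = Inr i" "y = Inr j" "i \<in> B" "j \<in> B" "i \<noteq> j" by auto
  then show "{\<psi> {x, k} | k. k \<in> Inl ` V} \<inter> {\<psi> {y, k} | k. k \<in> Inl ` V} = {}"
    using assms(3) by (simp only: colours_to_left_eq_link_colours)
qed

lemma simple_graph_finite:
  assumes "simple_graph V E"
  shows "finite V" and "finite E"
proof -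
  show "finite V" using assms by (simp add: simple_graph_def)
  moreover have "E \<subseteq> Pow V" using assms by (auto simp: simple_graph_def)
  ultimately show "finite E" by (simp add: finite_subset)
qed

lemma linear_compatible_subset:
  fixes V :: "'a set"
  assumes "simple_graph V E" and proper: "proper_edge_colouring (join_edges V E n) \<psi>"
    and large: "2 * card E * card V \<le> n"
  shows "\<exists>B\<subseteq>{..<n}. n \<le> 2 * (card V * card V + 1) * card B \<and>
           compatible (join_verts V n) (join_edges V E n) \<psi> (Inl ` V) ((\<lambda>e. Inl ` e) ` E) (Inr ` B)"
proof -
  note fin = simple_graph_finite[OF assms(1)]
  let ?col = "link_colours V \<psi>"
  let ?K = "\<psi> ` (\<lambda>e. Inl ` e) ` E"
  define Spoiled where "Spoiled = {j. j < n \<and> ?col j \<inter> ?K \<noteq> {}}"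
  define A where "A = {..<n} - Spoiled"
  define R where "R i j \<longleftrightarrow> ?col i \<inter> ?col j \<noteq> {}" for i j
  have "card Spoiled \<le> card E * card V"
    unfolding Spoiled_def using fin proper by (rule card_vertices_meeting_left_colours_le)
  moreover have "n \<le> card A + card Spoiled"
  proof -
    have "n = card (A \<union> Spoiled)" by (simp add: A_def Spoiled_def Un_absorb2 subset_eq)
    also have "\<dots> \<le> card A + card Spoiled" by (rule card_Un_le)
    finally show ?thesis .
  qed
  ultimately have "n \<le> 2 * card A" using large by linarith
  have "finite A" by (simp add: A_def)
  have R_sym: "R x y \<Longrightarrow> R y x" for x y by (auto simp: R_def)
  have closed_nbhd: "card (insert x {y\<in>A. R x y}) \<le> card V * card V + 1" for x
  proof (rule card_insert_le_m1)
    have "card {y\<in>A. R x y} \<le> card {j. j < n \<and> ?col j \<inter> ?col x \<noteq> {}}"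
      by (intro card_mono) (auto simp: A_def R_def)
    also have "\<dots> \<le> card V * card V"
      using fin(1) proper by (rule card_link_colour_conflicts_le)
    finally show "card {y\<in>A. R x y} \<le> card V * card V + 1 - 1" by simp
  qed simp
  obtain B where B: "B \<subseteq> A" "\<forall>x\<in>B. \<forall>y\<in>B. x \<noteq> y \<longrightarrow> \<not> R x y"
      "card A \<le> (card V * card V + 1) * card B"
    using greedy_independent_subset[OF \<open>finite A\<close> R_sym closed_nbhd] by blast
  have "compatible (join_verts V n) (join_edges V E n) \<psi> (Inl ` V) ((\<lambda>e. Inl ` e) ` E) (Inr ` B)"
    using B(1,2) by (intro compatible_with_left_copy) (auto simp: A_def Spoiled_def R_def)
  moreover have "n \<le> 2 * (card V * card V + 1) * card B"
    using \<open>n \<le> 2 * card A\<close> B(3) by linarith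
  moreover have "B \<subseteq> {..<n}" using B(1) by (auto simp: A_def)
  ultimately show ?thesis by blast
qed

theorem mainTheorem5:
  fixes V :: "'a set" and E :: "'a set set"
  assumes "simple_graph V E"
  shows "\<exists>c::real. c > 0 \<and> (\<exists>N::nat. \<forall>n\<ge>N. \<forall>\<psi> :: ('a + nat) set \<Rightarrow> nat.
           proper_edge_colouring (join_edges V E n) \<psi> \<longrightarrow>
           (\<exists>C. C \<subseteq> Inr ` {..<n} \<and> c * real n \<le> real (card C) \<and>
                compatible (join_verts V n) (join_edges V E n) \<psi> (Inl ` V) ((\<lambda>e. Inl ` e) ` E) C))"
proof -
  define D where "D = 2 * (card V * card V + 1)"
  have "D > 0" by (simp add: D_def)
  have main: "\<exists>C. C \<subseteq> Inr ` {..<n} \<and> 1 / real D * real n \<le> real (card C) \<and>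
           compatible (join_verts V n) (join_edges V E n) \<psi> (Inl ` V) ((\<lambda>e. Inl ` e) ` E) C"
    if large: "2 * card E * card V \<le> n" and proper: "proper_edge_colouring (join_edges V E n) \<psi>"
    for n and \<psi> :: "('a + nat) set \<Rightarrow> nat"
  proof -
    obtain B where B: "B \<subseteq> {..<n}" "n \<le> D * card B"
      "compatible (join_verts V n) (join_edges V E n) \<psi> (Inl ` V) ((\<lambda>e. Inl ` e) ` E) (Inr ` B)"
      using linear_compatible_subset[OF assms proper large] unfolding D_def by blast
    have "real n \<le> real D * real (card (Inr ` B :: ('a + nat) set))"
      using B(2) by (simp add: card_image flip: of_nat_mult)
    then have "1 / real D * real n \<le> real (card (Inr ` B :: ('a + nat) set))"
      using \<open>D > 0\<close> by (simp add: field_simps)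
    with B show ?thesis by blast
  qed
  show ?thesis
  proof (intro exI[of _ "1 / real D"] conjI exI[of _ "2 * card E * card V"] allI impI)
    show "1 / real D > 0" using \<open>D > 0\<close> by simp
  qed (rule main)
qed

end
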